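(* Let $N\ge 2$ be an integer and index rows and columns of $N\times N$ matrices by $0,1,\dots,N-1$. Let $H_{BH}$ be the complex symmetric tridiagonal matrix with $(H_{BH})_{n,n}={\rm i}(2n-N+1)$ and $(H_{BH})_{n-1,n}=(H_{BH})_{n,n-1}=\sqrt{n(N-n)}$ ($n=1,\dots,N-1$), and let $H_{AO}$ be the real tridiagonal matrix with $(H_{AO})_{n,n}=2n-N+1$, $(H_{AO})_{n-1,n}=\sqrt{n(N-n)}$, $(H_{AO})_{n,n-1}=-\sqrt{n(N-n)}$ ($n=1,\dots,N-1$), all other entries being zero. Let $\beta=-1+{\rm i}$ and define diagonal matrices $B_{n,n}=(-\beta)^{-n}$, $A_{n,n}=\beta^n$, and the upper triangular real matrix $R$ with entries $$R_{n,n+q}=\sqrt{\binom{n+q}{n}\binom{N-1-n}{q}},\qquad n=0,\dots,N-1,\ q=0,\dots,N-1-n,$$ and $R_{n,m}=0$ for $m<n$. Put $S=B\,R\,A$. Then $S$ is invertible, $H_{AO}=S\,H_{BH}\,S^{-1}$, and moreover $S=Q_{AO}\,Q_{BH}^{-1}$, where $Q_{BH}=D P G$ and $Q_{AO}=C P F$ with $P_{m,q}=\binom{N-1-m}{q}$, $D_{n,n}={\rm i}^n\sqrt{\binom{N-1}{n}}$, $G_{n,n}=(-{\rm i})^{N-n-1}(N-1-n)!$, $C_{n,n}=\sqrt{\binom{N-1}{n}}$, $F_{n,n}=(-1)^{N-n-1}(N-1-n)!$ (diagonal matrices; $\binom{a}{b}=0$ for $b>a$).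
   Context: $H_{BH}$ is the Bose–Hubbard Hamiltonian at its exceptional point $z=1$ and $H_{AO}$ the anharmonic-oscillator Hamiltonian at its exceptional point $\lambda=0$; $Q_{BH}$, $Q_{AO}$ are the transition matrices satisfying $H_{BH}Q_{BH}=Q_{BH}J$ and $H_{AO}Q_{AO}=Q_{AO}J$, where $J$ is the $N\times N$ nilpotent Jordan block ($J_{n,n+1}=1$, other entries zero). *)

theory Defs
  imports Complex_Main "Jordan_Normal_Form.Matrix"
begin

definition H_BH :: "nat \<Rightarrow> complex mat" where
  "H_BH N = mat N N (\<lambda>(i,j).
     if i = j then \<i> * of_int (2 * int i - int N + 1)
     else if j = i + 1 then complex_of_real (sqrt (real (j * (N - j))))
     else if i = j + 1 then complex_of_real (sqrt (real (i * (N - i))))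
     else 0)"

definition H_AO :: "nat \<Rightarrow> complex mat" where
  "H_AO N = mat N N (\<lambda>(i,j).
     if i = j then of_int (2 * int i - int N + 1)
     else if j = i + 1 then complex_of_real (sqrt (real (j * (N - j))))
     else if i = j + 1 then - complex_of_real (sqrt (real (i * (N - i))))
     else 0)"

definition beta :: complex where "beta = -1 + \<i>"

definition B_mat :: "nat \<Rightarrow> complex mat" where
  "B_mat N = mat N N (\<lambda>(i,j). if i = j then inverse ((- beta) ^ i) else 0)"

definition A_mat :: "nat \<Rightarrow> complex mat" where
  "A_mat N = mat N N (\<lambda>(i,j). if i = j then beta ^ i else 0)"

definition R_mat :: "nat \<Rightarrow> complex mat" where
  "R_mat N = mat N N (\<lambda>(n,m). if n \<le> m then
      complex_of_real (sqrt (real ((m choose n) * ((N - 1 - n) choose (m - n))))) else 0)"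

definition S_mat :: "nat \<Rightarrow> complex mat" where
  "S_mat N = B_mat N * R_mat N * A_mat N"

definition P_mat :: "nat \<Rightarrow> complex mat" where
  "P_mat N = mat N N (\<lambda>(m,q). of_nat ((N - 1 - m) choose q))"

definition D_mat :: "nat \<Rightarrow> complex mat" where
  "D_mat N = mat N N (\<lambda>(i,j). if i = j then
      \<i> ^ i * complex_of_real (sqrt (real ((N - 1) choose i))) else 0)"

definition G_mat :: "nat \<Rightarrow> complex mat" where
  "G_mat N = mat N N (\<lambda>(i,j). if i = j then
      (- \<i>) ^ (N - i - 1) * of_nat (fact (N - 1 - i)) else 0)"

definition C_mat :: "nat \<Rightarrow> complex mat" where
  "C_mat N = mat N N (\<lambda>(i,j). if i = j then
      complex_of_real (sqrt (real ((N - 1) choose i))) else 0)"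

definition F_mat :: "nat \<Rightarrow> complex mat" where
  "F_mat N = mat N N (\<lambda>(i,j). if i = j then
      (- 1) ^ (N - i - 1) * of_nat (fact (N - 1 - i)) else 0)"

definition Q_BH :: "nat \<Rightarrow> complex mat" where
  "Q_BH N = D_mat N * P_mat N * G_mat N"

definition Q_AO :: "nat \<Rightarrow> complex mat" where
  "Q_AO N = C_mat N * P_mat N * F_mat N"

end

(* Write c n = sqrt (C(N-1,n)). Both Hamiltonians belong to the family
   H_eps = eps T H_AO T^-1 with T = diag (eps^n): eps = i gives H_BH, eps = 1 gives H_AO.
   For every eps the matrix Q_eps = diag (eps^n c n) P diag ((-eps)^(N-1-q) (N-1-q)!)
   satisfies H_eps Q_eps = Q_eps J: the square roots in H_eps are absorbed by c (n-1), c (n+1),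
   and what remains entrywise is the binomial three-term recurrence
     - n C(m+1,q) + (n - m) C(m,q) + m C(m-1,q) = - (N - q) C(m,q-1),   m = N-1-n.
   Q_BH = Q_i and Q_AO = Q_1 are anti-triangular with nonzero anti-diagonal, hence invertible.
   Multiplying out, c n (S Q_BH)_nq is a trinomial sum that the binomial theorem evaluates at
   x = i beta, and 1 + i beta = -i makes it equal to c n (Q_AO)_nq. So S Q_BH = Q_AO, which
   gives det S != 0 and H_AO S = Q_AO J Q_BH^-1 = S H_BH. *)

theory Submission
  imports Defs "Jordan_Normal_Form.Jordan_Normal_Form"
begin

lemma index_mult_mat_sum:
  assumes "A \<in> carrier_mat n k" "B \<in> carrier_mat k m" "i < n" "j < m"
  shows "(A * B) $$ (i,j) = (\<Sum>l<k. A $$ (i,l) * B $$ (l,j))"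
  using assms by (simp add: scalar_prod_def lessThan_atLeast0 mult.commute)

lemma mat_diag_mult_mult_mat_diag:
  assumes "A \<in> carrier_mat n n"
  shows "mat_diag n f * A * mat_diag n g = mat n n (\<lambda>(i,j). f i * A $$ (i,j) * g j)"
proof -
  have "mat_diag n f * A = mat n n (\<lambda>(i,j). f i * A $$ (i,j))"
    by (rule mat_diag_mult_left[OF assms])
  also have "\<dots> * mat_diag n g = mat n n (\<lambda>(i,j). f i * A $$ (i,j) * g j)"
    by (subst mat_diag_mult_right[of _ n]) (auto intro: cong_mat)
  finally show ?thesis .
qed

lemma index_mult_tridiagonal:
  fixes H :: "'a :: semiring_0 mat"
  assumes H: "H \<in> carrier_mat n n" and X: "X \<in> carrier_mat n m" and ij: "i < n" "j < m"
    and tridiagonal: "\<And>k l. k < n \<Longrightarrow> l < n \<Longrightarrow> l + 1 < k \<or> k + 1 < l \<Longrightarrow> H $$ (k,l) = 0"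
  shows "(H * X) $$ (i,j) = (if 0 < i then H $$ (i,i-1) * X $$ (i-1,j) else 0)
    + H $$ (i,i) * X $$ (i,j) + (if i + 1 < n then H $$ (i,i+1) * X $$ (i+1,j) else 0)"
proof -
  let ?f = "\<lambda>l. H $$ (i,l) * X $$ (l,j)"
  let ?band = "(if 0 < i then {i-1} else {}) \<union> {i} \<union> (if i + 1 < n then {i+1} else {})"
  have "(H * X) $$ (i,j) = sum ?f {..<n}"
    by (rule index_mult_mat_sum[OF H X ij])
  also have "\<dots> = sum ?f ?band"
  proof (rule sum.mono_neutral_right)
    have "H $$ (i,l) = 0" if "l < n" "l \<notin> ?band" for l
      by (rule tridiagonal[OF ij(1) that(1)]) (use that in \<open>auto split: if_splits\<close>)
    thus "\<forall>l \<in> {..<n} - ?band. ?f l = 0" by simp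
  qed (use ij in auto)
  also have "\<dots> = (if 0 < i then ?f (i-1) else 0) + ?f i + (if i + 1 < n then ?f (i+1) else 0)"
    by (cases "0 < i"; cases "i + 1 < n") (auto simp: add_ac)
  finally show ?thesis .
qed

lemma index_mult_jordan_block_0:
  fixes X :: "'a :: semiring_1 mat"
  assumes X: "X \<in> carrier_mat n n" and ij: "i < n" "j < n"
  shows "(X * jordan_block n 0) $$ (i,j) = (if j = 0 then 0 else X $$ (i,j-1))"
proof -
  have "(X * jordan_block n 0) $$ (i,j) = (\<Sum>l<n. X $$ (i,l) * jordan_block n 0 $$ (l,j))"
    by (rule index_mult_mat_sum[OF X _ ij]) simp
  also have "\<dots> = (\<Sum>l<n. if j \<noteq> 0 \<and> l = j - 1 then X $$ (i,j-1) else 0)"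
    by (rule sum.cong) (use ij in auto)
  also have "\<dots> = (if j = 0 then 0 else X $$ (i,j-1))"
  proof (cases "j = 0")
    case False
    hence "j - 1 < n" using ij by simp
    thus ?thesis using False by (simp add: sum.delta)
  qed simp
  finally show ?thesis .
qed

lemma det_nonzero_if_anti_triangular:
  fixes A :: "'a :: idom mat"
  assumes A: "A \<in> carrier_mat n n"
    and below: "\<And>i j. i < n \<Longrightarrow> j < n \<Longrightarrow> n \<le> i + j \<Longrightarrow> A $$ (i,j) = 0"
    and anti_diagonal: "\<And>i. i < n \<Longrightarrow> A $$ (i, n - 1 - i) \<noteq> 0"
  shows "det A \<noteq> 0"
proof -
  define E :: "'a mat" where "E = mat n n (\<lambda>(i,j). if i + j = n - 1 then 1 else 0)"
  have E: "E \<in> carrier_mat n n" by (simp add: E_def)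
  have EA: "(E * A) $$ (i,j) = A $$ (n - 1 - i, j)" if "i < n" "j < n" for i j
  proof -
    have "(E * A) $$ (i,j) = (\<Sum>l<n. if l = n - 1 - i then A $$ (n - 1 - i, j) else 0)"
      unfolding index_mult_mat_sum[OF E A that] by (rule sum.cong) (use that in \<open>auto simp: E_def\<close>)
    thus ?thesis using that by simp
  qed
  have "det (E * A) = prod_list (diag_mat (E * A))"
    by (rule det_lower_triangular[of n]) (use A E EA below in auto)
  also have "\<dots> \<noteq> 0"
  proof -
    have "A $$ (n - 1 - i, i) \<noteq> 0" if "i < n" for i
      using anti_diagonal[of "n - 1 - i"] that by simp
    thus ?thesis using A E EA by (auto simp: diag_mat_def prod_list_zero_iff)
  qed
  finally show ?thesis
    using det_mult[OF E A] by simp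
qed

lemma inverse_mat_if_det_nonzero:
  fixes A :: "'a :: field mat"
  assumes "A \<in> carrier_mat n n" "det A \<noteq> 0"
  shows "\<exists>B \<in> carrier_mat n n. A * B = 1\<^sub>m n \<and> B * A = 1\<^sub>m n"
  using det_non_zero_imp_unit[OF assms, of "()"] by (auto simp: Units_def ring_mat_def)

lemma invertible_mat_if_det_nonzero:
  fixes A :: "'a :: field mat"
  assumes "A \<in> carrier_mat n n" "det A \<noteq> 0"
  shows "invertible_mat A"
  using inverse_mat_if_det_nonzero[OF assms] assms(1)
  unfolding invertible_mat_def inverts_mat_def by auto

lemma intertwiner_of_chain_bases:
  fixes S :: "'a :: semiring_1 mat"
  assumes carrier: "H1 \<in> carrier_mat n n" "H2 \<in> carrier_mat n n" "Q1 \<in> carrier_mat n n"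
      "Q1' \<in> carrier_mat n n" "S \<in> carrier_mat n n" "J \<in> carrier_mat n n"
    and chain1: "H1 * Q1 = Q1 * J" and chain2: "H2 * Q2 = Q2 * J"
    and SQ: "S * Q1 = Q2" and inv: "Q1 * Q1' = 1\<^sub>m n"
  shows "H2 * S = S * H1"
proof -
  note assoc = assoc_mult_mat[of _ n n _ n _ n]
  have "S * H1 = S * H1 * (Q1 * Q1')" using carrier by (simp add: inv)
  also have "\<dots> = S * (H1 * Q1) * Q1'" using carrier by (simp add: assoc)
  also have "\<dots> = S * Q1 * J * Q1'" using carrier by (simp add: chain1 assoc)
  also have "\<dots> = H2 * Q2 * Q1'" by (simp add: SQ chain2)
  also have "\<dots> = H2 * S * (Q1 * Q1')" using carrier by (simp add: assoc flip: SQ)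
  also have "\<dots> = H2 * S" using carrier by (simp add: inv)
  finally show ?thesis ..
qed

lemma choose_mult_choose_diff_swap:
  "(m choose p) * ((m - p) choose q) = (m choose q) * ((m - q) choose p)"
proof (cases "p + q \<le> m")
  case True
  have "(m choose p) * ((m - p) choose q) = (m choose (p + q)) * ((p + q) choose p)"
    using choose_mult[of p "p + q" m] True by simp
  also have "(p + q) choose p = (p + q) choose q"
    using binomial_symmetric[of p "p + q"] by simp
  also have "(m choose (p + q)) * ((p + q) choose q) = (m choose q) * ((m - q) choose p)"
    using choose_mult[of q "p + q" m] True by (simp add: add.commute)
  finally show ?thesis .
next
  case False
  hence "(m choose p) * ((m - p) choose q) = 0" "(m choose q) * ((m - q) choose p) = 0"
    by auto
  thus ?thesis by (simp only:)
qed

lemma sum_choose_mult_choose_diff_power: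
  fixes x :: "'a :: comm_semiring_1"
  shows "(\<Sum>p\<le>m. of_nat (m choose p) * of_nat ((m - p) choose q) * x ^ p)
    = of_nat (m choose q) * (1 + x) ^ (m - q)"
proof -
  have "(\<Sum>p\<le>m. of_nat (m choose p) * of_nat ((m - p) choose q) * x ^ p)
      = of_nat (m choose q) * (\<Sum>p\<le>m. of_nat ((m - q) choose p) * x ^ p)"
    unfolding sum_distrib_left
  proof (rule sum.cong)
    fix p
    have "of_nat (m choose p) * of_nat ((m - p) choose q)
      = (of_nat (m choose q) * of_nat ((m - q) choose p) :: 'a)"
      by (metis of_nat_mult choose_mult_choose_diff_swap)
    thus "of_nat (m choose p) * of_nat ((m - p) choose q) * x ^ p
      = of_nat (m choose q) * (of_nat ((m - q) choose p) * x ^ p)"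
      by (simp add: mult.assoc)
  qed simp
  also have "(\<Sum>p\<le>m. of_nat ((m - q) choose p) * x ^ p)
    = (\<Sum>p\<le>m - q. of_nat ((m - q) choose p) * x ^ p)"
    by (rule sum.mono_neutral_right) (auto simp: binomial_eq_0)
  also have "\<dots> = (1 + x) ^ (m - q)"
    using binomial_ring[of x 1 "m - q"] by (simp add: add.commute)
  finally show ?thesis .
qed

lemma sum_choose_trinomial_power:
  fixes x :: "'a :: comm_semiring_1"
  shows "(\<Sum>m\<le>l. of_nat (m choose n) * of_nat (l choose m) * of_nat ((l - m) choose q) * x ^ m)
    = of_nat (l choose n) * of_nat ((l - n) choose q) * x ^ n * (1 + x) ^ (l - n - q)"
proof (cases "n \<le> l")
  case True
  let ?f = "\<lambda>m. of_nat (m choose n) * of_nat (l choose m) * of_nat ((l - m) choose q) * x ^ m"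
  have "sum ?f {..l} = sum ?f {n..l}"
    by (rule sum.mono_neutral_right) (auto simp: binomial_eq_0)
  also have "\<dots> = (\<Sum>p\<le>l - n. ?f (n + p))"
    using sum.atLeastAtMost_shift_bounds[of ?f 0 n "l - n"] True
    by (simp add: atLeast0AtMost add.commute)
  also have "\<dots> = (\<Sum>p\<le>l - n. of_nat (l choose n) * x ^ n
      * (of_nat ((l - n) choose p) * of_nat ((l - n - p) choose q) * x ^ p))"
  proof (rule sum.cong)
    fix p assume "p \<in> {..l - n}"
    hence "(l choose (n + p)) * ((n + p) choose n) = (l choose n) * ((l - n) choose p)"
      using choose_mult[of n "n + p" l] True by simp
    hence "(of_nat ((n + p) choose n) * of_nat (l choose (n + p)) :: 'a)
      = of_nat (l choose n) * of_nat ((l - n) choose p)"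
      by (metis mult.commute of_nat_mult)
    thus "?f (n + p) = of_nat (l choose n) * x ^ n
      * (of_nat ((l - n) choose p) * of_nat ((l - n - p) choose q) * x ^ p)"
      by (simp add: power_add algebra_simps)
  qed simp
  also have "\<dots> = of_nat (l choose n) * x ^ n
      * (\<Sum>p\<le>l - n. of_nat ((l - n) choose p) * of_nat ((l - n - p) choose q) * x ^ p)"
    by (simp only: sum_distrib_left)
  also have "\<dots> = of_nat (l choose n) * of_nat ((l - n) choose q) * x ^ n * (1 + x) ^ (l - n - q)"
    unfolding sum_choose_mult_choose_diff_power by (simp only: mult_ac)
  finally show ?thesis .
qed (simp add: binomial_eq_0)

lemma choose_absorb_pred:
  assumes "0 < j"
  shows "j * (n choose j) = (Suc n - j) * (n choose (j - 1))"
  using times_binomial_minus1_eq[OF assms, of n] binomial_absorb_comp[of n "j - 1"] assms by simp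

lemma choose_three_term_recurrence:
  "- int n * int (Suc m choose q) + (int n - int m) * int (m choose q)
    + int m * int ((m - 1) choose q)
    = (if q = 0 then 0 else - (int n + int m + 1 - int q) * int (m choose (q - 1)))"
proof (cases q)
  case (Suc p)
  have pascal: "Suc m choose q = (m choose q) + (m choose p)" using Suc by simp
  have "int m * int ((m - 1) choose q) = int ((m - q) * (m choose q))"
    by (metis binomial_absorb_comp of_nat_mult)
  also have "\<dots> = (int m - int q) * int (m choose q)"
    by (cases "q \<le> m") (simp_all add: of_nat_diff binomial_eq_0)
  finally have absorb: "int m * int ((m - 1) choose q) = (int m - int q) * int (m choose q)" .
  have "int q * int (m choose q) = int ((Suc m - q) * (m choose p))"
    using choose_absorb_pred[of q m] Suc by (metis diff_Suc_1 of_nat_mult zero_less_Suc)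
  also have "\<dots> = (int m + 1 - int q) * int (m choose p)"
    using Suc by (cases "q \<le> Suc m") (simp_all add: of_nat_diff binomial_eq_0)
  finally have shift: "int q * int (m choose q) = (int m + 1 - int q) * int (m choose p)" .
  show ?thesis
    unfolding pascal absorb using shift Suc by (simp add: algebra_simps)
qed simp

lemma sqrt_mult_sqrt_nat:
  assumes "a * b = k ^ 2 * c"
  shows "sqrt (real a) * sqrt (real b) = real k * sqrt (real c)"
proof -
  have "sqrt (real a) * sqrt (real b) = sqrt ((real k)\<^sup>2 * real c)"
    by (simp add: assms flip: real_sqrt_mult of_nat_mult of_nat_power)
  thus ?thesis by (simp add: real_sqrt_mult)
qed

lemma sqrt_mult_sqrt_choose_pred:
  "sqrt (real (j * (N - j))) * sqrt (real ((N - 1) choose (j - 1)))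
    = real j * sqrt (real ((N - 1) choose j))"
proof (rule sqrt_mult_sqrt_nat)
  show "j * (N - j) * ((N - 1) choose (j - 1)) = j\<^sup>2 * ((N - 1) choose j)"
  proof (cases "0 < j \<and> 0 < N")
    case True
    then show ?thesis
      using choose_absorb_pred[of j "N - 1"] by (simp add: power2_eq_square)
  qed (auto simp: binomial_eq_0)
qed

lemma sqrt_mult_sqrt_choose:
  assumes "0 < j"
  shows "sqrt (real (j * (N - j))) * sqrt (real ((N - 1) choose j))
    = real (N - j) * sqrt (real ((N - 1) choose (j - 1)))"
proof (rule sqrt_mult_sqrt_nat)
  show "j * (N - j) * ((N - 1) choose j) = (N - j)\<^sup>2 * ((N - 1) choose (j - 1))"
  proof (cases "0 < N")
    case True
    then show ?thesis
      using choose_absorb_pred[OF assms, of "N - 1"] by (simp add: power2_eq_square)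
  qed simp
qed

lemma sqrt_choose_mult_sqrt_choose:
  assumes "n \<le> m" "m \<le> l"
  shows "sqrt (real ((m choose n) * ((l - n) choose (m - n))))
    * sqrt (real (l choose n)) * sqrt (real (l choose m))
    = real ((m choose n) * (l choose m))"
proof -
  have "(m choose n) * ((l - n) choose (m - n)) * (l choose n) * (l choose m)
    = ((m choose n) * (l choose m))\<^sup>2"
    using choose_mult[OF assms] by (simp add: power2_eq_square algebra_simps)
  hence "real ((m choose n) * ((l - n) choose (m - n))) * real (l choose n) * real (l choose m)
      = (real ((m choose n) * (l choose m)))\<^sup>2"
    by (metis of_nat_mult of_nat_power)
  thus ?thesis by (metis real_sqrt_mult real_sqrt_abs abs_of_nat)
qed

definition sqrt_choose :: "nat \<Rightarrow> nat \<Rightarrow> complex" where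
  "sqrt_choose l k = complex_of_real (sqrt (real (l choose k)))"

lemma sqrt_choose_mult_self: "sqrt_choose l k * sqrt_choose l k = of_nat (l choose k)"
  by (simp add: sqrt_choose_def flip: of_real_mult)

lemma sqrt_choose_nonzero: "k \<le> l \<Longrightarrow> sqrt_choose l k \<noteq> 0"
  by (simp add: sqrt_choose_def)

definition chain_weight :: "nat \<Rightarrow> complex \<Rightarrow> nat \<Rightarrow> complex" where
  "chain_weight N \<epsilon> q = (- \<epsilon>) ^ (N - 1 - q) * of_nat (fact (N - 1 - q))"

lemma chain_weight_pred:
  assumes "0 < q" "q < N"
  shows "chain_weight N \<epsilon> (q - 1) = - \<epsilon> * of_nat (N - q) * chain_weight N \<epsilon> q"
proof -
  define k where "k = N - 1 - q"
  have "N - 1 - (q - 1) = Suc k" "N - q = Suc k" using assms by (simp_all add: k_def)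
  thus ?thesis unfolding chain_weight_def k_def[symmetric] by (simp add: algebra_simps)
qed

definition H_fam :: "nat \<Rightarrow> complex \<Rightarrow> complex mat" where
  "H_fam N \<epsilon> = mat N N (\<lambda>(i,j).
     if i = j then \<epsilon> * of_int (2 * int i - int N + 1)
     else if j = i + 1 then complex_of_real (sqrt (real (j * (N - j))))
     else if i = j + 1 then - \<epsilon>\<^sup>2 * complex_of_real (sqrt (real (i * (N - i))))
     else 0)"

definition Q_fam :: "nat \<Rightarrow> complex \<Rightarrow> complex mat" where
  "Q_fam N \<epsilon> = mat N N (\<lambda>(n,q).
     \<epsilon> ^ n * sqrt_choose (N - 1) n * of_nat ((N - 1 - n) choose q) * chain_weight N \<epsilon> q)"

lemma H_fam_carrier [simp]: "H_fam N \<epsilon> \<in> carrier_mat N N"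
  by (simp add: H_fam_def)

lemma Q_fam_carrier [simp]: "Q_fam N \<epsilon> \<in> carrier_mat N N"
  by (simp add: Q_fam_def)

lemma index_Q_fam:
  "n < N \<Longrightarrow> q < N \<Longrightarrow>
    Q_fam N \<epsilon> $$ (n,q) = \<epsilon> ^ n * sqrt_choose (N - 1) n
      * of_nat ((N - 1 - n) choose q) * chain_weight N \<epsilon> q"
  by (simp add: Q_fam_def)

lemma index_H_fam:
  "i < N \<Longrightarrow> H_fam N \<epsilon> $$ (i,i) = \<epsilon> * of_int (2 * int i - int N + 1)"
  "i + 1 < N \<Longrightarrow> H_fam N \<epsilon> $$ (i,i+1) = complex_of_real (sqrt (real ((i + 1) * (N - (i + 1)))))"
  "0 < i \<Longrightarrow> i < N \<Longrightarrow> H_fam N \<epsilon> $$ (i,i-1) = - \<epsilon>\<^sup>2 * complex_of_real (sqrt (real (i * (N - i))))"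
  by (auto simp: H_fam_def)

lemma H_BH_eq_H_fam: "H_BH N = H_fam N \<i>"
  unfolding H_BH_def H_fam_def by (rule cong_mat) auto

lemma H_AO_eq_H_fam: "H_AO N = H_fam N 1"
  unfolding H_AO_def H_fam_def by (rule cong_mat) auto

lemma Q_BH_eq_Q_fam: "Q_BH N = Q_fam N \<i>"
proof -
  let ?d = "\<lambda>n. \<i> ^ n * sqrt_choose (N - 1) n" and ?g = "chain_weight N \<i>"
  have "D_mat N = mat_diag N ?d" "G_mat N = mat_diag N ?g"
    unfolding D_mat_def G_mat_def mat_diag_def sqrt_choose_def chain_weight_def
    by (auto intro!: cong_mat simp: diff_commute)
  hence "Q_BH N = mat N N (\<lambda>(i,j). ?d i * P_mat N $$ (i,j) * ?g j)"
    unfolding Q_BH_def by (simp add: mat_diag_mult_mult_mat_diag P_mat_def)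
  also have "\<dots> = Q_fam N \<i>"
    unfolding Q_fam_def P_mat_def by (rule cong_mat) auto
  finally show ?thesis .
qed

lemma Q_AO_eq_Q_fam: "Q_AO N = Q_fam N 1"
proof -
  let ?d = "sqrt_choose (N - 1)" and ?g = "chain_weight N 1"
  have "C_mat N = mat_diag N ?d" "F_mat N = mat_diag N ?g"
    unfolding C_mat_def F_mat_def mat_diag_def sqrt_choose_def chain_weight_def
    by (auto intro!: cong_mat simp: diff_commute)
  hence "Q_AO N = mat N N (\<lambda>(i,j). ?d i * P_mat N $$ (i,j) * ?g j)"
    unfolding Q_AO_def by (simp add: mat_diag_mult_mult_mat_diag P_mat_def)
  also have "\<dots> = Q_fam N 1"
    unfolding Q_fam_def P_mat_def by (rule cong_mat) auto
  finally show ?thesis .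
qed

lemma H_fam_subdiagonal_mult_Q_fam:
  assumes n: "n < N" and q: "q < N"
  shows "(if 0 < n then H_fam N \<epsilon> $$ (n,n-1) * Q_fam N \<epsilon> $$ (n-1,q) else 0)
    = - (\<epsilon> ^ (n + 1) * sqrt_choose (N - 1) n
      * chain_weight N \<epsilon> q * of_nat (n * ((N - n) choose q)))"
proof (cases "n = 0")
  case False
  define s where "s = complex_of_real (sqrt (real (n * (N - n))))"
  have s: "s * sqrt_choose (N - 1) (n - 1) = of_nat n * sqrt_choose (N - 1) n"
    unfolding s_def sqrt_choose_def
    by (metis sqrt_mult_sqrt_choose_pred of_real_mult of_real_of_nat_eq)
  have "N - 1 - (n - 1) = N - n" using False n by simp
  hence Qn: "Q_fam N \<epsilon> $$ (n-1,q)
      = \<epsilon> ^ (n - 1) * sqrt_choose (N - 1) (n - 1) * of_nat ((N - n) choose q) * chain_weight N \<epsilon> q"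
    using index_Q_fam[of "n - 1" N q] n q by simp
  have Hn: "H_fam N \<epsilon> $$ (n,n-1) = - \<epsilon>\<^sup>2 * s"
    using index_H_fam(3)[of n N \<epsilon>] False n by (simp add: s_def)
  have "H_fam N \<epsilon> $$ (n,n-1) * Q_fam N \<epsilon> $$ (n-1,q) = - (\<epsilon>\<^sup>2 * \<epsilon> ^ (n - 1))
      * (s * sqrt_choose (N - 1) (n - 1)) * of_nat ((N - n) choose q) * chain_weight N \<epsilon> q"
    unfolding Hn Qn by (simp add: mult_ac)
  also have "\<epsilon>\<^sup>2 * \<epsilon> ^ (n - 1) = \<epsilon> ^ (n + 1)"
    using False by (simp flip: power_add)
  finally show ?thesis
    using False unfolding s by (simp add: algebra_simps)
qed simp

lemma H_fam_superdiagonal_mult_Q_fam: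
  assumes q: "q < N"
  shows "(if n + 1 < N then H_fam N \<epsilon> $$ (n,n+1) * Q_fam N \<epsilon> $$ (n+1,q) else 0)
    = \<epsilon> ^ (n + 1) * sqrt_choose (N - 1) n * chain_weight N \<epsilon> q
      * of_nat ((N - (n + 1)) * ((N - 1 - (n + 1)) choose q))"
proof (cases "n + 1 < N")
  case True
  define s where "s = complex_of_real (sqrt (real ((n + 1) * (N - (n + 1)))))"
  have s: "s * sqrt_choose (N - 1) (n + 1) = of_nat (N - (n + 1)) * sqrt_choose (N - 1) n"
    using sqrt_mult_sqrt_choose[of "n + 1" N] unfolding s_def sqrt_choose_def
    by (metis add_diff_cancel_right' of_real_mult of_real_of_nat_eq zero_less_Suc Suc_eq_plus1)
  have Hn: "H_fam N \<epsilon> $$ (n,n+1) = s"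
    using index_H_fam(2)[OF True] by (simp add: s_def)
  have "H_fam N \<epsilon> $$ (n,n+1) * Q_fam N \<epsilon> $$ (n+1,q) = \<epsilon> ^ (n + 1)
      * (s * sqrt_choose (N - 1) (n + 1))
        * of_nat ((N - 1 - (n + 1)) choose q) * chain_weight N \<epsilon> q"
    unfolding Hn index_Q_fam[OF True q] by (simp add: mult_ac)
  thus ?thesis
    using True unfolding s by (simp add: mult_ac)
qed simp

lemma H_fam_mult_Q_fam: "H_fam N \<epsilon> * Q_fam N \<epsilon> = Q_fam N \<epsilon> * jordan_block N 0"
proof (rule eq_matI)
  fix n q
  assume "n < dim_row (Q_fam N \<epsilon> * jordan_block N 0)" "q < dim_col (Q_fam N \<epsilon> * jordan_block N 0)"
  hence n: "n < N" and q: "q < N" by (simp_all add: Q_fam_def)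
  define m where "m = N - 1 - n"
  define c where "c = sqrt_choose (N - 1) n"
  define w where "w = chain_weight N \<epsilon>"
  have m: "N - n = Suc m" "N - (n + 1) = m"
    "N - 1 - (n + 1) = m - 1" "2 * int n - int N + 1 = int n - int m"
    using n by (simp_all add: m_def of_nat_diff)
  have "(H_fam N \<epsilon> * Q_fam N \<epsilon>) $$ (n,q)
      = (if 0 < n then H_fam N \<epsilon> $$ (n,n-1) * Q_fam N \<epsilon> $$ (n-1,q) else 0)
        + H_fam N \<epsilon> $$ (n,n) * Q_fam N \<epsilon> $$ (n,q)
        + (if n + 1 < N then H_fam N \<epsilon> $$ (n,n+1) * Q_fam N \<epsilon> $$ (n+1,q) else 0)"
    by (rule index_mult_tridiagonal[OF H_fam_carrier Q_fam_carrier n q]) (auto simp: H_fam_def)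
  also have "\<dots> = \<epsilon> ^ (n + 1) * c * w q * of_int (- int n * int (Suc m choose q)
      + (int n - int m) * int (m choose q) + int m * int ((m - 1) choose q))"
    unfolding H_fam_subdiagonal_mult_Q_fam[OF n q] H_fam_superdiagonal_mult_Q_fam[OF q]
      index_H_fam(1)[OF n] index_Q_fam[OF n q] m m_def[symmetric] c_def[symmetric] w_def[symmetric]
    by (simp add: algebra_simps)
  also have "\<dots> = (if q = 0 then 0 else Q_fam N \<epsilon> $$ (n,q-1))"
  proof (cases "q = 0")
    case False
    have "int n + int m + 1 - int q = int (N - q)" using n q by (simp add: m_def of_nat_diff)
    hence "\<epsilon> ^ (n + 1) * c * w q * of_int (- int n * int (Suc m choose q)
        + (int n - int m) * int (m choose q) + int m * int ((m - 1) choose q))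
        = \<epsilon> ^ n * c * of_nat (m choose (q - 1)) * (- \<epsilon> * of_nat (N - q) * w q)"
      unfolding choose_three_term_recurrence using False by (simp add: algebra_simps)
    also have "\<dots> = Q_fam N \<epsilon> $$ (n,q-1)"
      using False n q chain_weight_pred[OF _ q, of \<epsilon>] by (simp add: index_Q_fam c_def w_def m_def)
    finally show ?thesis using False by simp
  qed (simp add: choose_three_term_recurrence)
  also have "\<dots> = (Q_fam N \<epsilon> * jordan_block N 0) $$ (n,q)"
    by (rule index_mult_jordan_block_0[OF Q_fam_carrier n q, symmetric])
  finally show "(H_fam N \<epsilon> * Q_fam N \<epsilon>) $$ (n,q) = (Q_fam N \<epsilon> * jordan_block N 0) $$ (n,q)" .
qed (simp_all add: Q_fam_def H_fam_def)

lemma det_Q_fam_nonzero: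
  assumes "\<epsilon> \<noteq> 0"
  shows "det (Q_fam N \<epsilon>) \<noteq> 0"
proof (rule det_nonzero_if_anti_triangular[OF Q_fam_carrier])
  show "Q_fam N \<epsilon> $$ (i,j) = 0" if "i < N" "j < N" "N \<le> i + j" for i j
    using that by (simp add: Q_fam_def binomial_eq_0)
  show "Q_fam N \<epsilon> $$ (i, N - 1 - i) \<noteq> 0" if "i < N" for i
    using that assms by (simp add: Q_fam_def sqrt_choose_nonzero chain_weight_def)
qed

lemma S_mat_eq: "S_mat N = mat N N (\<lambda>(i,j). inverse ((- beta) ^ i) * R_mat N $$ (i,j) * beta ^ j)"
proof -
  have "B_mat N = mat_diag N (\<lambda>i. inverse ((- beta) ^ i))" "A_mat N = mat_diag N (\<lambda>i. beta ^ i)"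
    unfolding B_mat_def A_mat_def mat_diag_def by (auto intro!: cong_mat)
  thus ?thesis
    unfolding S_mat_def by (simp add: mat_diag_mult_mult_mat_diag R_mat_def)
qed

lemma S_mat_carrier: "S_mat N \<in> carrier_mat N N"
  by (simp add: S_mat_eq)

lemma sqrt_choose_mult_R_mat_mult_sqrt_choose:
  assumes "n < N" "k < N"
  shows "sqrt_choose (N - 1) n * R_mat N $$ (n,k) * sqrt_choose (N - 1) k
    = of_nat ((k choose n) * ((N - 1) choose k))"
proof (cases "n \<le> k")
  case True
  have "sqrt_choose (N - 1) n * R_mat N $$ (n,k) * sqrt_choose (N - 1) k = complex_of_real
      (sqrt (real ((k choose n) * ((N - 1 - n) choose (k - n))))
        * sqrt (real ((N - 1) choose n)) * sqrt (real ((N - 1) choose k)))"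
    using assms True by (simp add: R_mat_def sqrt_choose_def mult_ac)
  also have "\<dots> = of_nat ((k choose n) * ((N - 1) choose k))"
    using sqrt_choose_mult_sqrt_choose[OF True, of "N - 1"] assms by simp
  finally show ?thesis .
qed (use assms in \<open>simp add: R_mat_def binomial_eq_0\<close>)

lemma inverse_power_neg_beta_mult_power_i_beta:
  "inverse ((- beta) ^ n) * (\<i> * beta) ^ n = (- \<i>) ^ n"
proof -
  have "beta \<noteq> 0" by (simp add: beta_def complex_eq_iff)
  moreover have "\<i> * beta = (- \<i>) * (- beta)" by simp
  ultimately show ?thesis
    by (simp only: power_mult_distrib) (simp add: field_simps)
qed

lemma one_plus_i_beta: "1 + \<i> * beta = - \<i>"
  by (simp add: beta_def complex_eq_iff)

lemma sqrt_choose_mult_index_S_mat_mult_Q_fam: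
  assumes n: "n < N" and q: "q < N"
  shows "sqrt_choose (N - 1) n * (S_mat N * Q_fam N \<i>) $$ (n,q)
    = inverse ((- beta) ^ n) * chain_weight N \<i> q
    * (of_nat ((N - 1) choose n) * of_nat ((N - 1 - n) choose q)
      * (\<i> * beta) ^ n * (- \<i>) ^ (N - 1 - n - q))"
proof -
  let ?c = "sqrt_choose (N - 1)" and ?w = "chain_weight N \<i> q"
  have "?c n * (S_mat N * Q_fam N \<i>) $$ (n,q)
    = (\<Sum>k<N. ?c n * S_mat N $$ (n,k) * Q_fam N \<i> $$ (k,q))"
    by (simp add: index_mult_mat_sum[of _ N N _ N] n q sum_distrib_left mult.assoc S_mat_eq)
  also have "\<dots> = (\<Sum>k\<le>N - 1. inverse ((- beta) ^ n) * ?w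
      * (of_nat (k choose n) * of_nat ((N - 1) choose k) * of_nat ((N - 1 - k) choose q)
        * (\<i> * beta) ^ k))"
  proof (rule sum.cong)
    show "{..<N} = {..N - 1}" using n by auto
    fix k assume "k \<in> {..N - 1}"
    hence k: "k < N" using n by auto
    have "?c n * S_mat N $$ (n,k) * Q_fam N \<i> $$ (k,q) = inverse ((- beta) ^ n) * ?w
        * ((?c n * R_mat N $$ (n,k) * ?c k) * of_nat ((N - 1 - k) choose q) * (\<i> * beta) ^ k)"
      using k n q by (simp add: S_mat_eq index_Q_fam power_mult_distrib mult_ac)
    thus "?c n * S_mat N $$ (n,k) * Q_fam N \<i> $$ (k,q) = inverse ((- beta) ^ n) * ?w
        * (of_nat (k choose n) * of_nat ((N - 1) choose k) * of_nat ((N - 1 - k) choose q)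
          * (\<i> * beta) ^ k)"
      unfolding sqrt_choose_mult_R_mat_mult_sqrt_choose[OF n k] by simp
  qed
  also have "\<dots> = inverse ((- beta) ^ n) * ?w
      * (of_nat ((N - 1) choose n) * of_nat ((N - 1 - n) choose q)
        * (\<i> * beta) ^ n * (- \<i>) ^ (N - 1 - n - q))"
    by (simp only: sum_choose_trinomial_power one_plus_i_beta flip: sum_distrib_left)
  finally show ?thesis .
qed

lemma chain_weight_i_beta:
  assumes "n + q < N"
  shows "inverse ((- beta) ^ n) * (\<i> * beta) ^ n * (- \<i>) ^ (N - 1 - n - q) * chain_weight N \<i> q
    = chain_weight N 1 q"
proof -
  define k where "k = N - 1 - n - q"
  have k: "N - 1 - q = n + k" using assms by (simp add: k_def)
  have "(- \<i>) ^ n * (- \<i>) ^ k * (- \<i>) ^ (n + k) = (- \<i>) ^ (n + k) * (- \<i>) ^ (n + k)"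
    by (simp add: power_add mult_ac)
  also have "\<dots> = (- 1) ^ (n + k)"
    by (simp flip: power_mult_distrib)
  finally show ?thesis
    unfolding inverse_power_neg_beta_mult_power_i_beta chain_weight_def k_def[symmetric] k
    by (simp add: mult.assoc)
qed

lemma S_mat_mult_Q_fam: "S_mat N * Q_fam N \<i> = Q_fam N 1"
proof (rule eq_matI)
  fix n q
  assume "n < dim_row (Q_fam N 1)" "q < dim_col (Q_fam N 1)"
  hence n: "n < N" and q: "q < N" by (simp_all add: Q_fam_def)
  have "sqrt_choose (N - 1) n * (S_mat N * Q_fam N \<i>) $$ (n,q)
    = sqrt_choose (N - 1) n * Q_fam N 1 $$ (n,q)"
  proof (cases "n + q < N")
    case True
    thus ?thesis
      unfolding sqrt_choose_mult_index_S_mat_mult_Q_fam[OF n q] index_Q_fam[OF n q]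
        chain_weight_i_beta[OF True, symmetric] sqrt_choose_mult_self[symmetric]
      by (simp add: mult_ac)
  next
    case False
    hence "(N - 1 - n) choose q = 0" using n by simp
    thus ?thesis
      unfolding sqrt_choose_mult_index_S_mat_mult_Q_fam[OF n q] index_Q_fam[OF n q] by simp
  qed
  thus "(S_mat N * Q_fam N \<i>) $$ (n,q) = Q_fam N 1 $$ (n,q)"
    using sqrt_choose_nonzero[of n "N - 1"] n by simp
qed (simp_all add: S_mat_eq Q_fam_def)

theorem mainTheorem3:
  fixes N :: nat
  assumes "N \<ge> 2"
  shows "invertible_mat (S_mat N)
    \<and> (\<exists>Sinv \<in> carrier_mat N N.
          S_mat N * Sinv = 1\<^sub>m N \<and> Sinv * S_mat N = 1\<^sub>m N
          \<and> H_AO N = S_mat N * H_BH N * Sinv)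
    \<and> invertible_mat (Q_BH N)
    \<and> (\<exists>Qinv \<in> carrier_mat N N.
          Q_BH N * Qinv = 1\<^sub>m N \<and> Qinv * Q_BH N = 1\<^sub>m N
          \<and> S_mat N = Q_AO N * Qinv)"
proof -
  note carrier = S_mat_carrier Q_fam_carrier H_fam_carrier
    and fam = H_BH_eq_H_fam H_AO_eq_H_fam Q_BH_eq_Q_fam Q_AO_eq_Q_fam
    and assoc = assoc_mult_mat[of _ N N _ N _ N]
  have SQ: "S_mat N * Q_BH N = Q_AO N"
    by (simp add: fam S_mat_mult_Q_fam)
  have det_Q_BH: "det (Q_BH N) \<noteq> 0" and det_Q_AO: "det (Q_AO N) \<noteq> 0"
    by (simp_all add: fam det_Q_fam_nonzero)
  hence det_S: "det (S_mat N) \<noteq> 0"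
    using det_mult[OF S_mat_carrier Q_fam_carrier, of N \<i>] SQ by (simp add: fam)
  obtain Sinv where Sinv: "Sinv \<in> carrier_mat N N" "S_mat N * Sinv = 1\<^sub>m N" "Sinv * S_mat N = 1\<^sub>m N"
    using inverse_mat_if_det_nonzero[OF S_mat_carrier det_S] by blast
  obtain Qinv where Qinv: "Qinv \<in> carrier_mat N N" "Q_BH N * Qinv = 1\<^sub>m N" "Qinv * Q_BH N = 1\<^sub>m N"
    using inverse_mat_if_det_nonzero[of "Q_BH N" N] det_Q_BH by (auto simp: fam)
  have "H_AO N * S_mat N = S_mat N * H_BH N"
    by (rule intertwiner_of_chain_bases[of _ N _ "Q_BH N" Qinv _ "jordan_block N 0" "Q_AO N"])
      (use carrier Qinv SQ H_fam_mult_Q_fam in \<open>simp_all add: fam\<close>)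
  hence "H_AO N = S_mat N * H_BH N * Sinv"
    using carrier Sinv by (metis fam assoc mult_carrier_mat right_mult_one_mat)
  moreover have "S_mat N = Q_AO N * Qinv"
    using carrier Qinv SQ by (metis fam assoc right_mult_one_mat)
  ultimately show ?thesis
    using Sinv Qinv invertible_mat_if_det_nonzero[OF S_mat_carrier det_S]
      invertible_mat_if_det_nonzero[of "Q_BH N" N] det_Q_BH by (auto simp: fam)
qed

end
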